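(* Let $G$ be a graph, $B$ a hopping forcing set of $G$, and $\mathcal F$ a set of hopping forces of $B$ arising from a chronological list that colors all of $V(G)$ blue, and let $t=\operatorname{pt}_{\operatorname{H}}(G;\mathcal F)$. Then for every $i\in\{0,\ldots,t\}$, $$\mathcal F^{(t-i)}\subseteq \operatorname{Term}(\mathcal F)^{[i]},$$ where $\mathcal F^{(j)}$ is computed for the process starting from $B$ with forces $\mathcal F$, and $\operatorname{Term}(\mathcal F)^{[i]}$ is computed for the process starting from $\operatorname{Term}(\mathcal F)$ with forces $\operatorname{Rev}(\mathcal F)$.
   Context: All graphs are finite, simple and undirected. Hopping color change rule: a blue vertex $v$ may force a white vertex $w$ to become blue if $v$ has not previously performed a force and every neighbor of $v$ is blue. For an initial blue set $B$, a chronological list of forces of $B$ is a sequence of such forces applied one at a time until no further force is possible; its underlying unordered set is a set of forces of $B$. $B$ is a hopping forcing set if some chronological list of forces of $B$ turns all vertices blue. For an initial set $S$ and a set of forces $\mathcal E$ of $S$, let $\mathcal E^{(0)}=S$ and for $j\geq1$ let $\mathcal E^{(j)}$ be the set of vertices $w\notin U_{j-1}:=\bigcup_{i=0}^{j-1}\mathcal E^{(i)}$ for which there is $(v\to w)\in\mathcal E$ with $v\in U_{j-1}$ and all neighbors of $v$ in $U_{j-1}$; write $S^{[i]}=\bigcup_{j=0}^{i}\mathcal E^{(j)}$. $\operatorname{pt}_{\operatorname{H}}(G;\mathcal E)$ is the least $j$ with $S^{[j]}=V(G)$. $\operatorname{Rev}(\mathcal F)=\{w\to v:(v\to w)\in\mathcal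 F\}$ and $\operatorname{Term}(\mathcal F)$ is the set of vertices of $G$ performing no force in $\mathcal F$; $\operatorname{Rev}(\mathcal F)$ is a valid set of hopping forces of $\operatorname{Term}(\mathcal F)$. *)

theory Defs
  imports Main
begin

definition simple_graph :: "'a set \<Rightarrow> ('a \<Rightarrow> 'a \<Rightarrow> bool) \<Rightarrow> bool" where
  "simple_graph V adj \<longleftrightarrow> finite V \<and> (\<forall>x y. adj x y \<longrightarrow> x \<in> V \<and> y \<in> V)
     \<and> (\<forall>x y. adj x y \<longrightarrow> adj y x) \<and> (\<forall>x. \<not> adj x x)"

definition nbhd :: "('a \<Rightarrow> 'a \<Rightarrow> bool) \<Rightarrow> 'a \<Rightarrow> 'a set" where
  "nbhd adj v = {u. adj v u}"

text \<open>Single hopping force v -> w, given current blue set Bl and set U of vertices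
  that have already forced.\<close>
definition hop_can_force :: "'a set \<Rightarrow> ('a \<Rightarrow> 'a \<Rightarrow> bool) \<Rightarrow> 'a set \<Rightarrow> 'a set \<Rightarrow> 'a \<Rightarrow> 'a \<Rightarrow> bool" where
  "hop_can_force V adj Bl U v w \<longleftrightarrow> v \<in> Bl \<and> v \<notin> U \<and> nbhd adj v \<subseteq> Bl \<and> w \<in> V \<and> w \<notin> Bl"

fun hop_run :: "'a set \<Rightarrow> ('a \<Rightarrow> 'a \<Rightarrow> bool) \<Rightarrow> 'a set \<Rightarrow> 'a set \<Rightarrow> ('a \<times> 'a) list \<Rightarrow> bool" where
  "hop_run V adj Bl U [] \<longleftrightarrow> \<not> (\<exists>v w. hop_can_force V adj Bl U v w)"
| "hop_run V adj Bl U ((v, w) # fs) \<longleftrightarrow>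
     hop_can_force V adj Bl U v w \<and> hop_run V adj (insert w Bl) (insert v U) fs"

definition chrono_list :: "'a set \<Rightarrow> ('a \<Rightarrow> 'a \<Rightarrow> bool) \<Rightarrow> 'a set \<Rightarrow> ('a \<times> 'a) list \<Rightarrow> bool" where
  "chrono_list V adj B fs \<longleftrightarrow> B \<subseteq> V \<and> hop_run V adj B {} fs"

definition hopping_forcing_set :: "'a set \<Rightarrow> ('a \<Rightarrow> 'a \<Rightarrow> bool) \<Rightarrow> 'a set \<Rightarrow> bool" where
  "hopping_forcing_set V adj B \<longleftrightarrow> (\<exists>fs. chrono_list V adj B fs \<and> B \<union> snd ` set fs = V)"

fun cum :: "('a \<Rightarrow> 'a \<Rightarrow> bool) \<Rightarrow> 'a set \<Rightarrow> ('a \<times> 'a) set \<Rightarrow> nat \<Rightarrow> 'a set"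
and layer :: "('a \<Rightarrow> 'a \<Rightarrow> bool) \<Rightarrow> 'a set \<Rightarrow> ('a \<times> 'a) set \<Rightarrow> nat \<Rightarrow> 'a set" where
  "layer adj S F 0 = S"
| "layer adj S F (Suc j) =
     {w. w \<notin> cum adj S F j \<and> (\<exists>v. (v, w) \<in> F \<and> v \<in> cum adj S F j \<and> nbhd adj v \<subseteq> cum adj S F j)}"
| "cum adj S F 0 = layer adj S F 0"
| "cum adj S F (Suc j) = cum adj S F j \<union> layer adj S F (Suc j)"

definition pt_H :: "'a set \<Rightarrow> ('a \<Rightarrow> 'a \<Rightarrow> bool) \<Rightarrow> 'a set \<Rightarrow> ('a \<times> 'a) set \<Rightarrow> nat" where
  "pt_H V adj S F = (LEAST j. cum adj S F j = V)"

definition Rev :: "('a \<times> 'a) set \<Rightarrow> ('a \<times> 'a) set" where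
  "Rev F = {(w, v). (v, w) \<in> F}"

definition Term :: "'a set \<Rightarrow> ('a \<times> 'a) set \<Rightarrow> 'a set" where
  "Term V F = {v \<in> V. \<not> (\<exists>w. (v, w) \<in> F)}"

end

theory Submission
  imports Defs
begin

text \<open>Run the forcing process of F backwards from time t. A vertex v forcing a target w
  that is still white at time t - k is blue at time k of the reversed process: when v forced w,
  all neighbours of v were already blue, so in the reversed process w and all its neighbours are
  blue one step earlier and w can force v back. Since every vertex is forced at most once,
  induction on k makes this precise, and a vertex first coloured at time t - i forces only
  targets coloured after time t - i.\<close>

lemma cum_mono: "j \<le> j' \<Longrightarrow> cum adj S F j \<subseteq> cum adj S F j'"
  by (induction j') (auto simp: le_Suc_eq)

lemma initial_subset_cum: "S \<subseteq> cum adj S F j"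
  using cum_mono[of 0 j adj S F] by simp

lemma layer_subset_cum: "layer adj S F j \<subseteq> cum adj S F j"
  by (cases j) auto

lemma layer_disjoint_earlier_cum:
  assumes "j' < j" and "x \<in> layer adj S F j"
  shows "x \<notin> cum adj S F j'"
proof -
  obtain j0 where j: "j = Suc j0" and "j' \<le> j0" using assms(1) by (cases j) auto
  then show ?thesis using assms(2) cum_mono[of j' j0 adj S F] by auto
qed

lemma cum_subset_targets: "cum adj S F j \<subseteq> S \<union> snd ` F"
  by (induction j) force+

lemma forcer_in_earlier_cum:
  assumes "(v, w) \<in> F" and "w \<in> cum adj S F j" and "w \<notin> S"
    and unique: "\<And>v'. (v', w) \<in> F \<Longrightarrow> v' = v"
  shows "\<exists>j'<j. v \<in> cum adj S F j' \<and> nbhd adj v \<subseteq> cum adj S F j'"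
  using assms(2)
proof (induction j)
  case 0
  then show ?case using assms(3) by simp
next
  case (Suc j)
  show ?case
  proof (cases "w \<in> cum adj S F j")
    case True
    then show ?thesis using Suc.IH less_SucI by blast
  next
    case False
    then obtain v' where "(v', w) \<in> F" "v' \<in> cum adj S F j" "nbhd adj v' \<subseteq> cum adj S F j"
      using Suc.prems by auto
    then show ?thesis using unique by blast
  qed
qed

lemma hop_run_targets_white: "hop_run V adj Bl U fs \<Longrightarrow> (v, w) \<in> set fs \<Longrightarrow> w \<notin> Bl"
  by (induction V adj Bl U fs rule: hop_run.induct) (fastforce simp: hop_can_force_def)+

lemma hop_run_distinct_targets: "hop_run V adj Bl U fs \<Longrightarrow> distinct (map snd fs)"
  by (induction V adj Bl U fs rule: hop_run.induct) (force dest: hop_run_targets_white)+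

lemma hop_run_covered_by_cum:
  assumes "hop_run V adj Bl U fs" and "set fs \<subseteq> F" and "Bl \<subseteq> cum adj S F j"
  shows "\<exists>j'. Bl \<union> snd ` set fs \<subseteq> cum adj S F j'"
  using assms
proof (induction V adj Bl U fs arbitrary: j rule: hop_run.induct)
  case (1 V adj Bl U)
  then show ?case by auto
next
  case (2 V adj Bl U v w fs)
  then have "(v, w) \<in> F" and "v \<in> Bl" and "nbhd adj v \<subseteq> Bl"
    by (auto simp: hop_can_force_def)
  then have "insert w Bl \<subseteq> cum adj S F (Suc j)"
    using "2.prems"(3) by auto
  moreover have "hop_run V adj (insert w Bl) (insert v U) fs" and "set fs \<subseteq> F"
    using "2.prems"(1,2) by auto
  ultimately obtain j' where "insert w Bl \<union> snd ` set fs \<subseteq> cum adj S F j'"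
    using "2.IH" by blast
  then show ?case by auto
qed

lemma cum_pt_H_eq:
  assumes "chrono_list V adj B fs" and "B \<union> snd ` set fs = V"
  shows "cum adj B (set fs) (pt_H V adj B (set fs)) = V"
proof -
  obtain j where "B \<union> snd ` set fs \<subseteq> cum adj B (set fs) j"
    using assms(1) hop_run_covered_by_cum[of V adj B "{}" fs "set fs" B 0]
    by (auto simp: chrono_list_def)
  then have "cum adj B (set fs) j = V"
    using cum_subset_targets[of adj B "set fs" j] assms(2) by blast
  then show ?thesis unfolding pt_H_def by (rule LeastI)
qed

locale hopping_reversal =
  fixes V :: "'a set" and adj :: "'a \<Rightarrow> 'a \<Rightarrow> bool" and B :: "'a set"
    and F :: "('a \<times> 'a) set" and t :: nat
  assumes adj_sym: "adj x y \<Longrightarrow> adj y x"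
    and adj_in_V: "adj x y \<Longrightarrow> y \<in> V"
    and target_in_V: "(v, w) \<in> F \<Longrightarrow> w \<in> V"
    and target_notin_initial: "(v, w) \<in> F \<Longrightarrow> w \<notin> B"
    and unique_forcer: "(v, w) \<in> F \<Longrightarrow> (v', w) \<in> F \<Longrightarrow> v' = v"
    and cum_complete: "cum adj B F t = V"
begin

abbreviation rcum :: "nat \<Rightarrow> 'a set" where
  "rcum \<equiv> cum adj (Term V F) (Rev F)"

lemma forcer_in_cum_before:
  assumes "(v, w) \<in> F" and "w \<in> cum adj B F (Suc j)"
  shows "v \<in> cum adj B F j \<and> nbhd adj v \<subseteq> cum adj B F j"
proof -
  obtain j' where "j' < Suc j" "v \<in> cum adj B F j'" "nbhd adj v \<subseteq> cum adj B F j'"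
    using forcer_in_earlier_cum[OF assms target_notin_initial[OF assms(1)]
        unique_forcer[OF assms(1)]] by blast
  moreover from \<open>j' < Suc j\<close> have "cum adj B F j' \<subseteq> cum adj B F j" by (simp add: cum_mono)
  ultimately show ?thesis by blast
qed

lemma in_rcum_if_targets_late:
  assumes forcers: "\<And>v w. (v, w) \<in> F \<Longrightarrow> w \<notin> cum adj B F (t - k) \<Longrightarrow> v \<in> rcum k"
    and "x \<in> V" and late: "\<And>r. (x, r) \<in> F \<Longrightarrow> r \<notin> cum adj B F (t - k)"
  shows "x \<in> rcum k"
proof (cases "\<exists>r. (x, r) \<in> F")
  case False
  then have "x \<in> Term V F" using \<open>x \<in> V\<close> by (simp add: Term_def)
  then show ?thesis by (rule subsetD[OF initial_subset_cum])
next
  case True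
  then obtain r where "(x, r) \<in> F" by blast
  then show ?thesis using forcers late by blast
qed

lemma forcer_in_rcum:
  "k \<le> t \<Longrightarrow> (v, w) \<in> F \<Longrightarrow> w \<notin> cum adj B F (t - k) \<Longrightarrow> v \<in> rcum k"
proof (induction k arbitrary: v w)
  case 0
  then show ?case using cum_complete target_in_V by auto
next
  case (Suc k)
  define j where "j = t - Suc k"
  have tk: "t - k = Suc j" using Suc.prems(1) by (simp add: j_def)
  have IH: "\<And>v w. (v, w) \<in> F \<Longrightarrow> w \<notin> cum adj B F (t - k) \<Longrightarrow> v \<in> rcum k"
    using Suc by simp
  have w_late: "w \<notin> cum adj B F j" using Suc.prems(3) by (simp add: j_def)
  have "w \<in> rcum k"
  proof (rule in_rcum_if_targets_late[OF IH])
    show "w \<in> V" using Suc.prems(2) target_in_V by blast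
    show "r \<notin> cum adj B F (t - k)" if "(w, r) \<in> F" for r
      using forcer_in_cum_before[OF that] w_late tk by auto
  qed
  moreover have "nbhd adj w \<subseteq> rcum k"
  proof
    fix u assume "u \<in> nbhd adj w"
    then have "adj w u" and "w \<in> nbhd adj u" by (auto simp: nbhd_def adj_sym)
    show "u \<in> rcum k"
    proof (rule in_rcum_if_targets_late[OF IH])
      show "u \<in> V" using \<open>adj w u\<close> adj_in_V by blast
      show "r \<notin> cum adj B F (t - k)" if "(u, r) \<in> F" for r
        using forcer_in_cum_before[OF that] \<open>w \<in> nbhd adj u\<close> w_late tk by auto
    qed
  qed
  moreover have "(w, v) \<in> Rev F" using Suc.prems(2) by (simp add: Rev_def)
  ultimately show ?case by auto
qed

lemma layer_subset_rcum:
  assumes "i \<le> t"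
  shows "layer adj B F (t - i) \<subseteq> rcum i"
proof
  fix x assume x: "x \<in> layer adj B F (t - i)"
  show "x \<in> rcum i"
  proof (rule in_rcum_if_targets_late)
    show "v \<in> rcum i" if "(v, w) \<in> F" "w \<notin> cum adj B F (t - i)" for v w
      by (rule forcer_in_rcum[OF assms that])
    have "cum adj B F (t - i) \<subseteq> V" using cum_mono[of "t - i" t adj B F] cum_complete by simp
    then show "x \<in> V" using subsetD[OF layer_subset_cum x] by blast
    show "r \<notin> cum adj B F (t - i)" if xr: "(x, r) \<in> F" for r
    proof
      assume "r \<in> cum adj B F (t - i)"
      then obtain j' where "j' < t - i" "x \<in> cum adj B F j'"
        using forcer_in_earlier_cum[OF xr _ target_notin_initial[OF xr] unique_forcer[OF xr]]
        by blast
      then show False using layer_disjoint_earlier_cum[OF _ x] by simp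
    qed
  qed
qed

end

theorem lemma4p6:
  fixes V :: "'a set" and adj :: "'a \<Rightarrow> 'a \<Rightarrow> bool" and B :: "'a set"
    and fs :: "('a \<times> 'a) list" and F :: "('a \<times> 'a) set" and t i :: nat
  assumes "simple_graph V adj"
    and "hopping_forcing_set V adj B"
    and "chrono_list V adj B fs"
    and "B \<union> snd ` set fs = V"
    and "F = set fs"
    and "t = pt_H V adj B F"
    and "i \<le> t"
  shows "layer adj B F (t - i) \<subseteq> cum adj (Term V F) (Rev F) i"
proof -
  have run: "hop_run V adj B {} fs" using assms(3) by (simp add: chrono_list_def)
  have "inj_on snd F"
    using hop_run_distinct_targets[OF run] assms(5) by (simp add: distinct_map)
  then have "(v', w) \<in> F \<Longrightarrow> (v, w) \<in> F \<Longrightarrow> v' = v" for v v' w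
    by (metis inj_on_def prod.inject snd_conv)
  moreover have "(v, w) \<in> F \<Longrightarrow> w \<in> V" for v w
    using assms(4,5) by force
  ultimately interpret hopping_reversal V adj B F t
    using assms(1,5,6) hop_run_targets_white[OF run] cum_pt_H_eq[OF assms(3,4)]
    by unfold_locales (auto simp: simple_graph_def)
  show ?thesis using layer_subset_rcum[OF assms(7)] .
qed

end
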